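(* Let $K=\mathbb{Q}(\rho)$ be a simplest cubic field, where $\rho$ is a root of $x^3-ax^2-(a+3)x-1$ with $a\in\mathbb{Z}_{\geq-1}$, and let $\Delta=a^2+3a+9$. Suppose $p^2\mid\Delta$ for a prime $p>3$. Then there are integers $1\leq k,l\leq p-1$ such that $\frac{k+l\rho+\rho^2}{p}\in\mathcal{O}_K$. *)

theory Defs
  imports "HOL-Computational_Algebra.Polynomial" "HOL-Computational_Algebra.Primes"
begin

end

theory Submission
  imports Defs
begin

text \<open>
  Shift the root: for \<open>3 r \<equiv> a (mod p)\<close> the element \<open>s = \<rho> - r\<close> is a root of
  \<open>f(x + r) = x\<^sup>3 + f''(r)/2 x\<^sup>2 + f'(r) x + f(r)\<close>, where \<open>f = x\<^sup>3 - a x\<^sup>2 - (a + 3) x - 1\<close>.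
  Because \<open>3 f'(r) = (3 r - a)\<^sup>2 - \<Delta>\<close> and \<open>27 f(r) = (3 r - a)\<^sup>3 - 3 (3 r - a) \<Delta> - (2 a + 3) \<Delta>\<close>,
  the hypothesis \<open>p\<^sup>2 dvd \<Delta>\<close> makes \<open>p\<close> divide the two middle coefficients and \<open>p\<^sup>2\<close>
  the constant one. For such a root \<open>s\<close>, the number \<open>(s\<^sup>2 + p n s + p m) / p\<close> is a root of an
  explicit monic integer cubic. Finally \<open>k + l \<rho> + \<rho>\<^sup>2 = s\<^sup>2 + (l + 2 r) s + (k + l r + r\<^sup>2)\<close>,
  so \<open>l \<equiv> -2 r\<close> and \<open>k \<equiv> r\<^sup>2 (mod p)\<close> work, and they are nonzero mod \<open>p\<close> because \<open>p\<close> does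
  not divide \<open>r\<close>.
\<close>

lemma algebraic_int_monic_cubic_root:
  fixes x :: "'a :: field" and c0 c1 c2 :: int
  assumes "x ^ 3 + of_int c2 * x ^ 2 + of_int c1 * x + of_int c0 = 0"
  shows "algebraic_int x"
proof
  show "poly [:of_int c0, of_int c1, of_int c2, 1:] x = 0"
    using assms by (simp add: algebra_simps power2_eq_square power3_eq_cube)
  show "\<forall>i. coeff [:of_int c0, of_int c1, of_int c2, 1:] i \<in> (\<int> :: 'a set)"
    by (auto simp: coeff_pCons split: nat.splits)
qed simp

lemma algebraic_int_cubic_square_div:
  fixes s :: "'a :: field_char_0" and p b0 b1 b2 n m :: int
  assumes "p \<noteq> 0"
    and root: "s ^ 3 + of_int b2 * s ^ 2 + of_int b1 * s + of_int b0 = 0"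
    and "p dvd b2" "p dvd b1" "p ^ 2 dvd b0" "p dvd n" "p dvd m"
  shows "algebraic_int ((s ^ 2 + of_int n * s + of_int m) / of_int p)"
proof -
  obtain u v w n' m' where
    b: "b2 = p * u" "b1 = p * v" "b0 = p ^ 2 * w" and nm: "n = p * n'" "m = p * m'"
    using assms(3-7) by (elim dvdE) blast
  define \<theta> where "\<theta> = (s ^ 2 + of_int n * s + of_int m) / (of_int p :: 'a)"
  \<comment> \<open>\<open>X\<^sup>3 + c2 X\<^sup>2 + c1 X + c0 = \<Prod>\<^sub>i (X - (s\<^sub>i\<^sup>2 + n s\<^sub>i + m) / p)\<close>, \<open>s\<^sub>i\<close> the roots of the given cubic\<close>
  define c2 where "c2 = -3*m' + 2*v + p*u*n' - p*u^2"
  define c1 where "c1 = 3*m'^2 - 4*v*m' + v^2 + 3*p*w*n' + p*v*n'^2 - 2*p*u*n'*m' - 2*p*u*w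
    - p*u*v*n' + 2*p*u^2*m'"
  define c0 where "c0 = - (m'^3) + 2*v*m'^2 - v^2*m' - 3*p*w*n'*m' - p*w^2 - p*v*n'^2*m'
    + p*v*w*n' + p*u*n'*m'^2 + 2*p*u*w*m' + p*u*v*n'*m' - p*u^2*m'^2 + p^2*w*n'^3 - p^2*u*w*n'^2"
  have "of_int p ^ 3 * (\<theta> ^ 3 + of_int c2 * \<theta> ^ 2 + of_int c1 * \<theta> + of_int c0)
      = (s ^ 3 + of_int (3*p*n' - p*u) * s ^ 2 + of_int (p*v + 3*p^2*n'^2 - 2*p^2*u*n') * s
           + of_int (- (p^2*w) + p^2*v*n' + p^3*n'^3 - p^3*u*n'^2))
        * (s ^ 3 + of_int b2 * s ^ 2 + of_int b1 * s + of_int b0)"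
    using assms(1) unfolding \<theta>_def c2_def c1_def c0_def b nm
    by (simp add: field_simps power2_eq_square power3_eq_cube)
  also have "\<dots> = 0"
    using root by simp
  finally have "\<theta> ^ 3 + of_int c2 * \<theta> ^ 2 + of_int c1 * \<theta> + of_int c0 = 0"
    using assms(1) by simp
  then show ?thesis
    unfolding \<theta>_def by (rule algebraic_int_monic_cubic_root)
qed

lemma simplest_cubic_shift_coeffs_dvd:
  fixes a p :: int
  assumes "prime p" "p > 3" "p ^ 2 dvd a ^ 2 + 3 * a + 9"
  obtains r where "\<not> p dvd r" "p dvd 3 * r - a" "p dvd 3 * r ^ 2 - 2 * a * r - (a + 3)"
    "p ^ 2 dvd r ^ 3 - a * r ^ 2 - (a + 3) * r - 1"
proof -
  have "\<not> p dvd 3"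
    using assms(2) by (auto dest: zdvd_imp_le)
  then have coprime3: "coprime 3 p"
    using assms(1) by (simp add: prime_imp_coprime coprime_commute)
  obtain x y where "x * 3 + y * p = 1"
    using bezout_int[of 3 p] coprime3 by auto
  define r where "r = a * x"
  define \<Delta> where "\<Delta> = a ^ 2 + 3 * a + 9"
  define d where "d = 3 * r - a"
  have "d = p * (- a * y)"
    using \<open>x * 3 + y * p = 1\<close> unfolding d_def r_def by algebra
  then have "p dvd d" by simp
  have "p ^ 2 dvd \<Delta>"
    using assms(3) by (simp add: \<Delta>_def)
  then have "p dvd \<Delta>"
    by (rule dvd_trans[rotated]) (simp add: power2_eq_square)
  have "\<not> p dvd r"
  proof
    assume "p dvd r"
    moreover have "a = 3 * r - d"
      by (simp add: d_def)
    ultimately have "p dvd a"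
      using \<open>p dvd d\<close> by (metis dvd_diff dvd_mult)
    moreover have "3 * 3 = \<Delta> - a * (a + 3)"
      by (simp add: \<Delta>_def algebra_simps power2_eq_square)
    ultimately have "p dvd 3 * 3"
      using \<open>p dvd \<Delta>\<close> by (metis dvd_diff dvd_mult2)
    then show False
      using \<open>\<not> p dvd 3\<close> assms(1) prime_dvd_mult_iff by blast
  qed
  moreover have "p dvd 3 * r ^ 2 - 2 * a * r - (a + 3)"
  proof -
    have "3 * (3 * r ^ 2 - 2 * a * r - (a + 3)) = d ^ 2 - \<Delta>"
      unfolding d_def \<Delta>_def by (simp add: algebra_simps power2_eq_square)
    moreover have "p dvd d ^ 2 - \<Delta>"
      using \<open>p dvd d\<close> \<open>p dvd \<Delta>\<close> by (simp add: power2_eq_square dvd_diff dvd_mult2)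
    ultimately have "p dvd 3 * (3 * r ^ 2 - 2 * a * r - (a + 3))"
      by metis
    then show ?thesis
      using coprime3 coprime_dvd_mult_right_iff coprime_commute by blast
  qed
  moreover have "p ^ 2 dvd r ^ 3 - a * r ^ 2 - (a + 3) * r - 1"
  proof -
    have "27 * (r ^ 3 - a * r ^ 2 - (a + 3) * r - 1) = d ^ 3 - 3 * d * \<Delta> - (2 * a + 3) * \<Delta>"
      unfolding d_def \<Delta>_def by (simp add: algebra_simps power2_eq_square power3_eq_cube)
    moreover have "p ^ 2 dvd d ^ 3" "p ^ 2 dvd 3 * d * \<Delta>"
      using \<open>p dvd d\<close> \<open>p dvd \<Delta>\<close> by (simp_all add: power2_eq_square power3_eq_cube mult_dvd_mono)
    ultimately have "p ^ 2 dvd 27 * (r ^ 3 - a * r ^ 2 - (a + 3) * r - 1)"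
      using \<open>p ^ 2 dvd \<Delta>\<close> by (metis dvd_diff dvd_mult)
    moreover have "coprime (p ^ 2) 27"
      using coprime3 coprime_power_right_iff[of "p ^ 2" 3 3] by (simp add: coprime_commute)
    ultimately show ?thesis
      using coprime_dvd_mult_right_iff by blast
  qed
  ultimately show ?thesis
    using that \<open>p dvd d\<close> d_def by blast
qed

lemma mod_not_dvd_bounds:
  fixes x p :: int
  assumes "p > 0" "\<not> p dvd x"
  shows "1 \<le> x mod p \<and> x mod p \<le> p - 1"
proof -
  have "x mod p \<noteq> 0" "0 \<le> x mod p" "x mod p < p"
    using assms by (simp_all add: dvd_eq_mod_eq_0)
  then show ?thesis by linarith
qed

lemma square_shift_nonzero_residues:
  fixes P r :: int
  assumes "prime P" "P > 2" "\<not> P dvd r"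
  obtains k l where "1 \<le> k \<and> k \<le> P - 1" "1 \<le> l \<and> l \<le> P - 1"
    "P dvd l + 2 * r" "P dvd k + l * r + r ^ 2"
proof -
  define l where "l = (- 2 * r) mod P"
  define k where "k = r ^ 2 mod P"
  have "\<not> P dvd - 2 * r" "\<not> P dvd r ^ 2"
    using assms by (auto simp: prime_dvd_mult_iff prime_dvd_power_iff dest: zdvd_imp_le)
  then have bounds: "1 \<le> k \<and> k \<le> P - 1" "1 \<le> l \<and> l \<le> P - 1"
    using \<open>P > 2\<close> unfolding k_def l_def by (simp_all add: mod_not_dvd_bounds)
  have "l mod P = (- 2 * r) mod P" "k mod P = r ^ 2 mod P"
    by (simp_all add: l_def k_def)
  then have "P dvd l - (- 2 * r)" "P dvd k - r ^ 2"
    by (simp_all only: mod_eq_dvd_iff)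
  then have "P dvd l + 2 * r" "P dvd (k - r ^ 2) + (l + 2 * r) * r"
    by simp_all
  then have "P dvd l + 2 * r" "P dvd k + l * r + r ^ 2"
    by (simp_all add: algebra_simps power2_eq_square)
  then show ?thesis
    using that bounds by blast
qed

theorem proposition4p2:
  fixes a :: int and p :: nat and \<rho> :: complex
  assumes "a \<ge> -1"
    and "\<rho> ^ 3 - of_int a * \<rho> ^ 2 - of_int (a + 3) * \<rho> - 1 = 0"
    and "prime p" and "p > 3"
    and "int p ^ 2 dvd a ^ 2 + 3 * a + 9"
  shows "\<exists>k l :: int. 1 \<le> k \<and> k \<le> int p - 1 \<and> 1 \<le> l \<and> l \<le> int p - 1 \<and>
           algebraic_int ((of_int k + of_int l * \<rho> + \<rho> ^ 2) / of_nat p)"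
proof -
  \<comment> \<open>The hypothesis \<open>a \<ge> -1\<close> only normalises the field; the argument does not use it.\<close>
  define P where "P = int p"
  have "prime P" "P > 3"
    using assms(3,4) by (simp_all add: P_def)
  obtain r where r: "\<not> P dvd r" "P dvd 3 * r - a" "P dvd 3 * r ^ 2 - 2 * a * r - (a + 3)"
    "P ^ 2 dvd r ^ 3 - a * r ^ 2 - (a + 3) * r - 1"
    using simplest_cubic_shift_coeffs_dvd[OF \<open>prime P\<close> \<open>P > 3\<close>] assms(5) P_def by blast
  obtain k l where bounds: "1 \<le> k \<and> k \<le> P - 1" "1 \<le> l \<and> l \<le> P - 1"
    and kl: "P dvd l + 2 * r" "P dvd k + l * r + r ^ 2"
    using square_shift_nonzero_residues[OF \<open>prime P\<close> _ r(1)] \<open>P > 3\<close> by auto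
  define s where "s = \<rho> - of_int r"
  have "s ^ 3 + of_int (3 * r - a) * s ^ 2 + of_int (3 * r ^ 2 - 2 * a * r - (a + 3)) * s
      + of_int (r ^ 3 - a * r ^ 2 - (a + 3) * r - 1) = \<rho> ^ 3 - of_int a * \<rho> ^ 2 - of_int (a + 3) * \<rho> - 1"
    unfolding s_def by (simp add: algebra_simps power2_eq_square power3_eq_cube)
  with assms(2) have root: "s ^ 3 + of_int (3 * r - a) * s ^ 2
      + of_int (3 * r ^ 2 - 2 * a * r - (a + 3)) * s + of_int (r ^ 3 - a * r ^ 2 - (a + 3) * r - 1) = 0"
    by simp
  have "algebraic_int ((s ^ 2 + of_int (l + 2 * r) * s + of_int (k + l * r + r ^ 2)) / of_int P)"
    using \<open>P > 3\<close> kl by (intro algebraic_int_cubic_square_div[OF _ root r(2-4)]) simp_all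
  moreover have "s ^ 2 + of_int (l + 2 * r) * s + of_int (k + l * r + r ^ 2)
      = of_int k + of_int l * \<rho> + \<rho> ^ 2"
    unfolding s_def by (simp add: algebra_simps power2_eq_square)
  ultimately have "algebraic_int ((of_int k + of_int l * \<rho> + \<rho> ^ 2) / of_int P)"
    by (simp only:)
  then show ?thesis
    using bounds unfolding P_def by auto
qed

end
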